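(* In the setting of the context, $$\frac{\sum_{i=1}^a\frac N{n_i}(\boldsymbol T_W)_{ii}A_{i,1}-\sum_{i=1}^a\frac N{n_i}(\boldsymbol T_W)_{ii}\operatorname{tr}(\boldsymbol T_S\boldsymbol\Sigma_i)}{\sqrt{2\operatorname{tr}((\boldsymbol T\boldsymbol V_N)^2)}}\to0\quad\text{in probability}$$ as $\min(n_1,\dots,n_a)\to\infty$, irrespective of the behaviour of $d$ and $a$ (which may be fixed or depend arbitrarily on the sample sizes).
   Context: Let $a,d\in\mathbb N$, $n_1,\dots,n_a\ge2$, $N=\sum_i n_i$. Observations $\boldsymbol X_{i,j}\sim\mathcal N_d(\boldsymbol\mu_i,\boldsymbol\Sigma_i)$, $j=1,\dots,n_i$, $i=1,\dots,a$, mutually independent, $\boldsymbol\Sigma_i$ symmetric positive definite. Let $\boldsymbol T=\boldsymbol T_W\otimes\boldsymbol T_S$ with $\boldsymbol T_W\in\mathbb R^{a\times a}$, $\boldsymbol T_S\in\mathbb R^{d\times d}$ symmetric idempotent, and $\boldsymbol V_N=\bigoplus_{i=1}^a\frac N{n_i}\boldsymbol\Sigma_i$. Define $A_{i,1}=\frac1{2\binom{n_i}{2}}\sum_{1\le\ell_2<\ell_1\le n_i}(\boldsymbol X_{i,\ell_1}-\boldsymbol X_{i,\ell_2})^\top\boldsymbol T_S(\boldsymbol X_{i,\ell_1}-\boldsymbol X_{i,\ell_2})$. *)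

theory Defs
  imports "HOL-Probability.Probability"
begin

text \<open>Matrices are represented as functions of two indices, only entries with
  indices in the relevant finite index set matter. Indices start at 0.\<close>

definition sym_idem :: "nat \<Rightarrow> (nat \<Rightarrow> nat \<Rightarrow> real) \<Rightarrow> bool" where
  "sym_idem m T \<longleftrightarrow> (\<forall>p<m. \<forall>q<m. T p q = T q p) \<and>
     (\<forall>p<m. \<forall>q<m. (\<Sum>r<m. T p r * T r q) = T p q)"

definition quad_form :: "nat \<Rightarrow> (nat \<Rightarrow> nat \<Rightarrow> real) \<Rightarrow> (nat \<Rightarrow> real) \<Rightarrow> real" where
  "quad_form d A x = (\<Sum>l<d. \<Sum>m<d. x l * A l m * x m)"

definition sym_posdef :: "nat \<Rightarrow> (nat \<Rightarrow> nat \<Rightarrow> real) \<Rightarrow> bool" where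
  "sym_posdef d S \<longleftrightarrow> (\<forall>l<d. \<forall>m<d. S l m = S m l) \<and>
     (\<forall>x. (\<exists>l<d. x l \<noteq> 0) \<longrightarrow> quad_form d S x > 0)"

text \<open>Multivariate normal law N_d(mu, Sigma) (Sigma positive definite) of the random vector
  with coordinates X 0, ..., X (d-1), via the Cramer-Wold characterisation: every nontrivial
  linear combination c' X is univariate normal with mean c' mu and variance c' Sigma c.\<close>

definition mvn_distributed ::
  "'a measure \<Rightarrow> nat \<Rightarrow> (nat \<Rightarrow> 'a \<Rightarrow> real) \<Rightarrow> (nat \<Rightarrow> real) \<Rightarrow> (nat \<Rightarrow> nat \<Rightarrow> real) \<Rightarrow> bool" where
  "mvn_distributed M d X mu S \<longleftrightarrow>
     (\<forall>l<d. X l \<in> borel_measurable M) \<and>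
     (\<forall>c. (\<exists>l<d. c l \<noteq> 0) \<longrightarrow>
        distributed M lborel (\<lambda>\<omega>. \<Sum>l<d. c l * X l \<omega>)
          (\<lambda>x. ennreal (normal_density (\<Sum>l<d. c l * mu l) (sqrt (quad_form d S c)) x)))"

definition mat_mult :: "('i set) \<Rightarrow> ('i \<Rightarrow> 'i \<Rightarrow> real) \<Rightarrow> ('i \<Rightarrow> 'i \<Rightarrow> real) \<Rightarrow> 'i \<Rightarrow> 'i \<Rightarrow> real" where
  "mat_mult S A B p q = (\<Sum>r\<in>S. A p r * B r q)"

definition mat_trace :: "('i set) \<Rightarrow> ('i \<Rightarrow> 'i \<Rightarrow> real) \<Rightarrow> real" where
  "mat_trace S A = (\<Sum>p\<in>S. A p p)"

text \<open>Kronecker product T_W \<otimes> T_S, index (i,l) = block i, row l within block.\<close>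

definition kron :: "(nat \<Rightarrow> nat \<Rightarrow> real) \<Rightarrow> (nat \<Rightarrow> nat \<Rightarrow> real) \<Rightarrow> nat \<times> nat \<Rightarrow> nat \<times> nat \<Rightarrow> real" where
  "kron A B p q = A (fst p) (fst q) * B (snd p) (snd q)"

definition blockdiag :: "(nat \<Rightarrow> nat \<Rightarrow> nat \<Rightarrow> real) \<Rightarrow> nat \<times> nat \<Rightarrow> nat \<times> nat \<Rightarrow> real" where
  "blockdiag V p q = (if fst p = fst q then V (fst p) (snd p) (snd q) else 0)"

definition block_index :: "nat \<Rightarrow> nat \<Rightarrow> (nat \<times> nat) set" where
  "block_index a d = {..<a} \<times> {..<d}"

definition A1 :: "nat \<Rightarrow> nat \<Rightarrow> (nat \<Rightarrow> nat \<Rightarrow> real) \<Rightarrow> (nat \<Rightarrow> nat \<Rightarrow> real) \<Rightarrow> real" where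
  "A1 d n TS X = 1 / (2 * real (n choose 2)) *
     (\<Sum>l1<n. \<Sum>l2<l1. quad_form d TS (\<lambda>l. X l1 l - X l2 l))"

definition mat_tr_prod :: "nat \<Rightarrow> (nat \<Rightarrow> nat \<Rightarrow> real) \<Rightarrow> (nat \<Rightarrow> nat \<Rightarrow> real) \<Rightarrow> real" where
  "mat_tr_prod d A B = (\<Sum>l<d. \<Sum>m<d. A l m * B m l)"

end

theory Submission
  imports Defs
begin

text \<open>Write \<open>Y\<close> for a centred observation and \<open>T = T_S\<close>. Since
  \<open>(Y_p - Y_q)' T (Y_p - Y_q) = Q_p + Q_q - 2 B_pq\<close> with \<open>Q_p = Y_p' T Y_p\<close> and
  \<open>B_pq = Y_p' T Y_q\<close>, the numerator is a weighted sum of the centred quadratic forms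
  \<open>Q_p - tr(T \<Sigma>_i)\<close> minus a weighted sum of the off-diagonal bilinear forms \<open>B_pq\<close>.
  By independence and the Gaussian fourth moments all these summands are uncorrelated, with
  variances \<open>2 tr((T \<Sigma>_i)^2)\<close> and \<open>tr((T \<Sigma>_i)^2)\<close>. Hence the second moment of the numerator
  is at most \<open>4 / (min n_i - 1)\<close> times \<open>\<Sum>_i (N/n_i)^2 (T_W)_ii^2 tr((T \<Sigma>_i)^2)\<close>, which is the
  sum of the diagonal blocks of \<open>tr((T V_N)^2)\<close> and so bounded by it, all off-diagonal blocks
  being nonnegative. Chebyshev's inequality gives the tail bound \<open>2 / (\<epsilon>^2 (min n_i - 1))\<close>,
  uniformly in \<open>a\<close> and \<open>d\<close>.\<close>

definition bilinear_form :: "nat \<Rightarrow> (nat \<Rightarrow> nat \<Rightarrow> real) \<Rightarrow> (nat \<Rightarrow> real) \<Rightarrow> (nat \<Rightarrow> real) \<Rightarrow> real" where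
  "bilinear_form d S x y = (\<Sum>l<d. \<Sum>m<d. x l * S l m * y m)"

lemma quad_form_eq_bilinear_form: "quad_form d S x = bilinear_form d S x x"
  by (simp add: quad_form_def bilinear_form_def)

lemma quad_form_cong: "(\<And>l. l < d \<Longrightarrow> x l = y l) \<Longrightarrow> quad_form d S x = quad_form d S y"
  unfolding quad_form_def by (intro sum.cong refl) auto

lemma bilinear_form_commute:
  assumes "\<And>l m. l < d \<Longrightarrow> m < d \<Longrightarrow> S l m = S m l"
  shows "bilinear_form d S y x = bilinear_form d S x y"
  unfolding bilinear_form_def by (subst sum.swap) (auto intro!: sum.cong simp: assms)

lemma
  assumes "\<And>l m. l < d \<Longrightarrow> m < d \<Longrightarrow> S l m = S m l"
  shows quad_form_add: "quad_form d S (\<lambda>l. x l + y l) = quad_form d S x + quad_form d S y + 2 * bilinear_form d S x y"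
    and quad_form_diff: "quad_form d S (\<lambda>l. x l - y l) = quad_form d S x + quad_form d S y - 2 * bilinear_form d S x y"
  using bilinear_form_commute[OF assms, where x=y and y=x] unfolding quad_form_def bilinear_form_def
  by (simp_all add: algebra_simps sum.distrib sum_subtractf)

lemma bilinear_form_sym_idem:
  assumes "sym_idem d T"
  shows "bilinear_form d T y z = (\<Sum>k<d. (\<Sum>l<d. T l k * y l) * (\<Sum>l<d. T l k * z l))"
proof -
  have sym: "T p q = T q p" and idem: "(\<Sum>r<d. T p r * T r q) = T p q" if "p < d" "q < d" for p q
    using assms that unfolding sym_idem_def by blast+
  have "(\<Sum>k<d. (\<Sum>l<d. T l k * y l) * (\<Sum>m<d. T m k * z m))
      = (\<Sum>k<d. \<Sum>l<d. \<Sum>m<d. y l * (T l k * T k m) * z m)"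
    unfolding sum_product by (intro sum.cong refl) (simp add: sym)
  also have "\<dots> = (\<Sum>l<d. \<Sum>m<d. \<Sum>k<d. y l * (T l k * T k m) * z m)"
    by (subst sum.swap) (rule sum.cong[OF refl], rule sum.swap)
  also have "\<dots> = bilinear_form d T y z"
    unfolding bilinear_form_def by (intro sum.cong refl) (simp add: idem flip: sum_distrib_left sum_distrib_right)
  finally show ?thesis ..
qed

lemma sym_idem_columns_inner:
  assumes "sym_idem d T" "l < d" "m < d"
  shows "(\<Sum>k<d. T l k * T m k) = T l m"
proof -
  have "(\<Sum>k<d. T l k * T m k) = (\<Sum>k<d. T l k * T k m)"
    using assms unfolding sym_idem_def by (intro sum.cong refl) simp
  also have "\<dots> = T l m" using assms unfolding sym_idem_def by blast
  finally show ?thesis .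
qed

lemma sum_swap_pairs:
  "(\<Sum>k<d. \<Sum>k'<d. \<Sum>x<d. \<Sum>y<d. f k k' x y) = (\<Sum>x<d. \<Sum>y<d. \<Sum>k<d. \<Sum>k'<d. f k k' x y)"
proof -
  have "(\<Sum>k<d. \<Sum>k'<d. \<Sum>x<d. \<Sum>y<d. f k k' x y) = (\<Sum>k<d. \<Sum>x<d. \<Sum>k'<d. \<Sum>y<d. f k k' x y)"
    by (rule sum.cong[OF refl], rule sum.swap)
  also have "\<dots> = (\<Sum>x<d. \<Sum>k<d. \<Sum>y<d. \<Sum>k'<d. f k k' x y)"
    by (subst sum.swap) (rule sum.cong[OF refl], rule sum.cong[OF refl], rule sum.swap)
  also have "\<dots> = (\<Sum>x<d. \<Sum>y<d. \<Sum>k<d. \<Sum>k'<d. f k k' x y)"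
    by (rule sum.cong[OF refl], rule sum.swap)
  finally show ?thesis .
qed

text \<open>In matrix notation: \<open>tr(T B T A) = tr((T A T) (T B T))\<close>, where the entries of \<open>T A T\<close>
  are the values of the bilinear form of \<open>A\<close> on the columns of \<open>T\<close>.\<close>

lemma trace_sym_idem_columns:
  assumes T: "sym_idem d T" and A_sym: "\<And>l m. l < d \<Longrightarrow> m < d \<Longrightarrow> A l m = A m l"
  shows "(\<Sum>l<d. \<Sum>m<d. (\<Sum>r<d. T l r * B r m) * (\<Sum>s<d. T m s * A s l))
    = (\<Sum>k<d. \<Sum>k'<d. bilinear_form d A (\<lambda>l. T l k) (\<lambda>l. T l k') * bilinear_form d B (\<lambda>l. T l k) (\<lambda>l. T l k'))"
proof -
  have T_sym: "T l m = T m l" if "l < d" "m < d" for l m using T that unfolding sym_idem_def by blast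
  define F where "F = (\<Sum>x<d. \<Sum>y<d. \<Sum>p<d. \<Sum>q<d. A x y * B p q * (T x p * T y q))"
  have "(\<Sum>l<d. \<Sum>m<d. (\<Sum>r<d. T l r * B r m) * (\<Sum>s<d. T m s * A s l))
      = (\<Sum>l<d. \<Sum>m<d. \<Sum>r<d. \<Sum>s<d. A l s * B r m * (T l r * T s m))"
    unfolding sum_product using A_sym T_sym by (intro sum.cong refl) (simp add: mult_ac)
  also have "\<dots> = (\<Sum>l<d. \<Sum>m<d. \<Sum>s<d. \<Sum>r<d. A l s * B r m * (T l r * T s m))"
    by (intro sum.cong refl sum.swap)
  also have "\<dots> = (\<Sum>l<d. \<Sum>s<d. \<Sum>m<d. \<Sum>r<d. A l s * B r m * (T l r * T s m))"
    by (intro sum.cong refl sum.swap)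
  also have "\<dots> = (\<Sum>l<d. \<Sum>s<d. \<Sum>r<d. \<Sum>m<d. A l s * B r m * (T l r * T s m))"
    by (intro sum.cong refl sum.swap)
  also have "\<dots> = F" unfolding F_def ..
  finally have lhs: "(\<Sum>l<d. \<Sum>m<d. (\<Sum>r<d. T l r * B r m) * (\<Sum>s<d. T m s * A s l)) = F" .
  have "(\<Sum>k<d. \<Sum>k'<d. bilinear_form d A (\<lambda>l. T l k) (\<lambda>l. T l k') * bilinear_form d B (\<lambda>l. T l k) (\<lambda>l. T l k'))
      = (\<Sum>k<d. \<Sum>k'<d. \<Sum>x<d. \<Sum>y<d. \<Sum>p<d. \<Sum>q<d. A x y * B p q * ((T x k * T p k) * (T y k' * T q k')))"
    unfolding bilinear_form_def sum_distrib_right unfolding sum_distrib_left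
    by (intro sum.cong refl) (simp add: mult_ac)
  also have "\<dots> = (\<Sum>x<d. \<Sum>y<d. \<Sum>p<d. \<Sum>q<d. \<Sum>k<d. \<Sum>k'<d. A x y * B p q * ((T x k * T p k) * (T y k' * T q k')))"
    by (subst sum_swap_pairs) (intro sum.cong refl sum_swap_pairs)
  also have "\<dots> = F"
    unfolding F_def
  proof (intro sum.cong refl)
    fix x y p q assume "x \<in> {..<d}" "y \<in> {..<d}" "p \<in> {..<d}" "q \<in> {..<d}"
    have "(\<Sum>k<d. \<Sum>k'<d. A x y * B p q * ((T x k * T p k) * (T y k' * T q k')))
        = A x y * B p q * ((\<Sum>k<d. T x k * T p k) * (\<Sum>k'<d. T y k' * T q k'))"
      unfolding sum_product by (simp only: sum_distrib_left)
    also have "\<dots> = A x y * B p q * (T x p * T y q)"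
      using sym_idem_columns_inner[OF T] \<open>x \<in> {..<d}\<close> \<open>y \<in> {..<d}\<close> \<open>p \<in> {..<d}\<close> \<open>q \<in> {..<d}\<close> by simp
    finally show "(\<Sum>k<d. \<Sum>k'<d. A x y * B p q * ((T x k * T p k) * (T y k' * T q k'))) = A x y * B p q * (T x p * T y q)" .
  qed
  finally show ?thesis using lhs by simp
qed

lemma sum_pairs_add:
  fixes f :: "nat \<Rightarrow> real"
  shows "(\<Sum>p<n. \<Sum>q<p. f p + f q) = (real n - 1) * (\<Sum>j<n. f j)"
  by (induction n) (simp_all add: sum.distrib algebra_simps)

lemma real_choose_two: "2 * real (n choose 2) = real n * (real n - 1)"
  by (induction n) (simp_all add: numeral_2_eq_2 algebra_simps)

lemma sum_lessThan_real: "2 * (\<Sum>p<n. real p) = real n * (real n - 1)"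
  by (induction n) (auto simp: algebra_simps)

lemma weighted_variance_identity:
  fixes N P c t :: real
  assumes "N \<ge> 2" and "2 * P = N * (N - 1)"
  shows "N * (c / N)\<^sup>2 * (2 * t) + P * (2 * c / (N * (N - 1)))\<^sup>2 * t = 2 / (N - 1) * (c\<^sup>2 * t)"
proof -
  have N: "N \<noteq> 0" "N - 1 \<noteq> 0" using assms(1) by auto
  have "N * (c / N)\<^sup>2 * (2 * t) = 2 * c\<^sup>2 * t / N"
    using N by (simp add: power2_eq_square field_simps)
  moreover have "K / 2 * (2 * c / K)\<^sup>2 * t = 2 * c\<^sup>2 * t / K" if "K \<noteq> 0" for K :: real
    using that by (simp add: power2_eq_square field_simps)
  then have "P * (2 * c / (N * (N - 1)))\<^sup>2 * t = 2 * c\<^sup>2 * t / (N * (N - 1))"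
    using N assms(2) by (metis mult_eq_0_iff nonzero_mult_div_cancel_left zero_neq_numeral)
  moreover have "2 * c\<^sup>2 * t / N + 2 * c\<^sup>2 * t / (N * (N - 1)) = 2 / (N - 1) * (c\<^sup>2 * t)"
    using N by (simp add: field_simps)
  ultimately show ?thesis by simp
qed

lemma abs_mult4_le_fourth_powers:
  fixes x y z w :: real
  shows "\<bar>x * y * z * w\<bar> \<le> (x ^ 4 + y ^ 4 + z ^ 4 + w ^ 4) / 4"
proof -
  have amgm: "\<bar>u * v\<bar> \<le> (u\<^sup>2 + v\<^sup>2) / 2" for u v :: real
    using sum_squares_bound[of "\<bar>u\<bar>" "\<bar>v\<bar>"] by (simp add: abs_mult)
  have "\<bar>x * y * z * w\<bar> = \<bar>x * y\<bar> * \<bar>z * w\<bar>" by (simp add: abs_mult)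
  also have "\<dots> \<le> (x\<^sup>2 + y\<^sup>2) / 2 * ((z\<^sup>2 + w\<^sup>2) / 2)"
    by (intro mult_mono amgm) auto
  also have "\<dots> \<le> (((x\<^sup>2 + y\<^sup>2) / 2)\<^sup>2 + ((z\<^sup>2 + w\<^sup>2) / 2)\<^sup>2) / 2"
    using amgm[of "(x\<^sup>2 + y\<^sup>2) / 2" "(z\<^sup>2 + w\<^sup>2) / 2"] by simp
  also have "\<dots> \<le> (x ^ 4 + y ^ 4 + z ^ 4 + w ^ 4) / 4"
    using sum_squares_bound[of "x\<^sup>2" "y\<^sup>2"] sum_squares_bound[of "z\<^sup>2" "w\<^sup>2"]
    by (simp add: power2_eq_square power4_eq_xxxx field_simps)
  finally show ?thesis .
qed

context prob_space
begin

lemma mvn_linear_moments: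
  fixes c :: "nat \<Rightarrow> real"
  assumes N: "mvn_distributed M d X mu S" and P: "sym_posdef d S"
  defines "L \<equiv> \<lambda>\<omega>. \<Sum>l<d. c l * (X l \<omega> - mu l)"
  shows "integrable M (\<lambda>\<omega>. L \<omega> ^ k)"
    and "expectation L = 0"
    and "expectation (\<lambda>\<omega>. L \<omega> ^ 2) = quad_form d S c"
    and "expectation (\<lambda>\<omega>. L \<omega> ^ 4) = 3 * (quad_form d S c)\<^sup>2"
proof -
  have "integrable M (\<lambda>\<omega>. L \<omega> ^ k) \<and> expectation L = 0 \<and> expectation (\<lambda>\<omega>. L \<omega> ^ 2) = quad_form d S c
     \<and> expectation (\<lambda>\<omega>. L \<omega> ^ 4) = 3 * (quad_form d S c)\<^sup>2"
  proof (cases "\<exists>l<d. c l \<noteq> 0")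
    case False
    then have "L = (\<lambda>\<omega>. 0)" and "quad_form d S c = 0"
      unfolding L_def quad_form_def by (auto intro!: ext sum.neutral)
    then show ?thesis by (cases k) auto
  next
    case True
    define m where "m = (\<Sum>l<d. c l * mu l)"
    define \<sigma> where "\<sigma> = sqrt (quad_form d S c)"
    have q_pos: "quad_form d S c > 0" using P True unfolding sym_posdef_def by auto
    then have \<sigma>_pos: "\<sigma> > 0" unfolding \<sigma>_def by simp
    have D: "distributed M lborel (\<lambda>\<omega>. \<Sum>l<d. c l * X l \<omega>) (\<lambda>x. ennreal (normal_density m \<sigma> x))"
      using N True unfolding mvn_distributed_def m_def \<sigma>_def by auto
    have L_eq: "L = (\<lambda>\<omega>. (\<Sum>l<d. c l * X l \<omega>) - m)"
      unfolding L_def m_def by (auto intro!: ext simp: sum_subtractf right_diff_distrib)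
    have int: "integrable M (\<lambda>\<omega>. L \<omega> ^ j)" for j
      unfolding L_eq using distributed_integrable[OF D, of "\<lambda>x. (x - m) ^ j"]
        integrable_normal_moment[OF \<sigma>_pos, of m j] by simp
    have E: "expectation (\<lambda>\<omega>. L \<omega> ^ j) = (\<integral>x. normal_density m \<sigma> x * (x - m) ^ j \<partial>lborel)" for j
      unfolding L_eq using distributed_integral[OF D, of "\<lambda>x. (x - m) ^ j"] by simp
    have "expectation L = 0"
      using E[of 1] integral_normal_moment_odd[OF \<sigma>_pos, of m 0] by simp
    moreover have "expectation (\<lambda>\<omega>. L \<omega> ^ 2) = quad_form d S c"
      using E[of 2] integral_normal_moment_even[OF \<sigma>_pos, of m 1] q_pos by (simp add: \<sigma>_def)
    moreover have "expectation (\<lambda>\<omega>. L \<omega> ^ 4) = 3 * (quad_form d S c)\<^sup>2"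
      using E[of 4] integral_normal_moment_even[OF \<sigma>_pos, of m 2] q_pos
      by (simp add: \<sigma>_def fact_numeral power_divide field_simps)
    ultimately show ?thesis using int by blast
  qed
  then show "integrable M (\<lambda>\<omega>. L \<omega> ^ k)" "expectation L = 0"
    "expectation (\<lambda>\<omega>. L \<omega> ^ 2) = quad_form d S c"
    "expectation (\<lambda>\<omega>. L \<omega> ^ 4) = 3 * (quad_form d S c)\<^sup>2" by auto
qed

text \<open>Polarisation: the mixed moments are read off the moments of the linear forms of
  \<open>ca + cb\<close> and \<open>ca - cb\<close>.\<close>

lemma mvn_bilinear_moments:
  assumes N: "mvn_distributed M d X mu S" and P: "sym_posdef d S"
  defines "L \<equiv> \<lambda>c \<omega>. \<Sum>l<d. c l * (X l \<omega> - mu l)"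
  shows "integrable M (\<lambda>\<omega>. L ca \<omega> * L cb \<omega>)"
    and "expectation (\<lambda>\<omega>. L ca \<omega> * L cb \<omega>) = bilinear_form d S ca cb"
    and "integrable M (\<lambda>\<omega>. (L ca \<omega>)\<^sup>2 * (L cb \<omega>)\<^sup>2)"
    and "expectation (\<lambda>\<omega>. (L ca \<omega>)\<^sup>2 * (L cb \<omega>)\<^sup>2)
           = quad_form d S ca * quad_form d S cb + 2 * (bilinear_form d S ca cb)\<^sup>2"
proof -
  have sym: "\<And>l m. l < d \<Longrightarrow> m < d \<Longrightarrow> S l m = S m l" using P unfolding sym_posdef_def by auto
  have G: "\<And>c k. integrable M (\<lambda>\<omega>. L c \<omega> ^ k)"
    "\<And>c. expectation (\<lambda>\<omega>. L c \<omega> ^ 2) = quad_form d S c"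
    "\<And>c. expectation (\<lambda>\<omega>. L c \<omega> ^ 4) = 3 * (quad_form d S c)\<^sup>2"
    unfolding L_def using mvn_linear_moments[OF N P] by auto
  have "L (\<lambda>l. ca l + cb l) = (\<lambda>\<omega>. L ca \<omega> + L cb \<omega>)" "L (\<lambda>l. ca l - cb l) = (\<lambda>\<omega>. L ca \<omega> - L cb \<omega>)"
    unfolding L_def by (auto intro!: ext simp: algebra_simps sum.distrib sum_subtractf)
  note Gp = G[of "\<lambda>l. ca l + cb l", unfolded this(1)] and Gm = G[of "\<lambda>l. ca l - cb l", unfolded this(2)]
  note Ga = G[of ca] and Gb = G[of cb]
  have mixed: "L ca \<omega> * L cb \<omega> = ((L ca \<omega> + L cb \<omega>)\<^sup>2 - (L ca \<omega> - L cb \<omega>)\<^sup>2) / 4" for \<omega>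
    by (simp add: power2_eq_square algebra_simps)
  show "integrable M (\<lambda>\<omega>. L ca \<omega> * L cb \<omega>)"
    unfolding mixed using Gp(1)[of 2] Gm(1)[of 2] by auto
  show "expectation (\<lambda>\<omega>. L ca \<omega> * L cb \<omega>) = bilinear_form d S ca cb"
    unfolding mixed using Gp(1)[of 2] Gm(1)[of 2] Gp(2) Gm(2) quad_form_add[OF sym] quad_form_diff[OF sym]
    by simp
  have mixed4: "(L ca \<omega>)\<^sup>2 * (L cb \<omega>)\<^sup>2 = ((L ca \<omega> + L cb \<omega>) ^ 4 + (L ca \<omega> - L cb \<omega>) ^ 4
      - 2 * (L ca \<omega>) ^ 4 - 2 * (L cb \<omega>) ^ 4) / 12" for \<omega>
    by (simp add: power2_eq_square power4_eq_xxxx algebra_simps)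
  show "integrable M (\<lambda>\<omega>. (L ca \<omega>)\<^sup>2 * (L cb \<omega>)\<^sup>2)"
    unfolding mixed4 using Gp(1)[of 4] Gm(1)[of 4] Ga(1)[of 4] Gb(1)[of 4] by auto
  show "expectation (\<lambda>\<omega>. (L ca \<omega>)\<^sup>2 * (L cb \<omega>)\<^sup>2)
      = quad_form d S ca * quad_form d S cb + 2 * (bilinear_form d S ca cb)\<^sup>2"
    unfolding mixed4 using Gp(1)[of 4] Gm(1)[of 4] Ga(1)[of 4] Gb(1)[of 4] Gp(3) Gm(3) Ga(3) Gb(3)
      quad_form_add[OF sym, where x=ca and y=cb] quad_form_diff[OF sym, where x=ca and y=cb]
    by (simp add: power2_eq_square algebra_simps)
qed

lemma integrable_mult4_of_fourth_powers:
  fixes f g h k :: "'a \<Rightarrow> real"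
  assumes [measurable]: "f \<in> borel_measurable M" "g \<in> borel_measurable M"
    "h \<in> borel_measurable M" "k \<in> borel_measurable M"
    and "integrable M (\<lambda>\<omega>. f \<omega> ^ 4)" "integrable M (\<lambda>\<omega>. g \<omega> ^ 4)"
    "integrable M (\<lambda>\<omega>. h \<omega> ^ 4)" "integrable M (\<lambda>\<omega>. k \<omega> ^ 4)"
  shows "integrable M (\<lambda>\<omega>. f \<omega> * g \<omega> * h \<omega> * k \<omega>)"
proof (rule Bochner_Integration.integrable_bound)
  show "integrable M (\<lambda>\<omega>. (f \<omega> ^ 4 + g \<omega> ^ 4 + h \<omega> ^ 4 + k \<omega> ^ 4) / 4)"
    using assms(5-8) by auto
  show "AE \<omega> in M. norm (f \<omega> * g \<omega> * h \<omega> * k \<omega>) \<le> norm ((f \<omega> ^ 4 + g \<omega> ^ 4 + h \<omega> ^ 4 + k \<omega> ^ 4) / 4)"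
    using abs_mult4_le_fourth_powers by (auto intro: order_trans)
qed measurable

lemma indep_vars_expectation_mult_restrict:
  fixes f :: "'b \<Rightarrow> real" and g :: "('i \<Rightarrow> 'b) \<Rightarrow> real"
  assumes ind: "indep_vars M' Y I" and J: "i \<in> I" "J \<subseteq> I" "i \<notin> J"
    and [measurable]: "f \<in> borel_measurable (M' i)" "g \<in> borel_measurable (PiM J M')"
    and int: "integrable M (\<lambda>\<omega>. f (Y i \<omega>))" "integrable M (\<lambda>\<omega>. g (\<lambda>j\<in>J. Y j \<omega>))"
  shows "expectation (\<lambda>\<omega>. f (Y i \<omega>) * g (\<lambda>j\<in>J. Y j \<omega>))
           = expectation (\<lambda>\<omega>. f (Y i \<omega>)) * expectation (\<lambda>\<omega>. g (\<lambda>j\<in>J. Y j \<omega>))"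
    and "integrable M (\<lambda>\<omega>. f (Y i \<omega>) * g (\<lambda>j\<in>J. Y j \<omega>))"
proof -
  have "indep_var (PiM {i} M') (\<lambda>\<omega>. \<lambda>j\<in>{i}. Y j \<omega>) (PiM J M') (\<lambda>\<omega>. \<lambda>j\<in>J. Y j \<omega>)"
    using J by (intro indep_var_restrict[OF ind]) auto
  then have "indep_var borel ((\<lambda>u. f (u i)) \<circ> (\<lambda>\<omega>. \<lambda>j\<in>{i}. Y j \<omega>)) borel (g \<circ> (\<lambda>\<omega>. \<lambda>j\<in>J. Y j \<omega>))"
    by (rule indep_var_compose) measurable
  then have "indep_var borel (\<lambda>\<omega>. f (Y i \<omega>)) borel (\<lambda>\<omega>. g (\<lambda>j\<in>J. Y j \<omega>))"
    by (simp add: comp_def)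
  then show "expectation (\<lambda>\<omega>. f (Y i \<omega>) * g (\<lambda>j\<in>J. Y j \<omega>))
           = expectation (\<lambda>\<omega>. f (Y i \<omega>)) * expectation (\<lambda>\<omega>. g (\<lambda>j\<in>J. Y j \<omega>))"
    and "integrable M (\<lambda>\<omega>. f (Y i \<omega>) * g (\<lambda>j\<in>J. Y j \<omega>))"
    using indep_var_lebesgue_integral indep_var_integrable int by blast+
qed

lemma expectation_square_sum_orthogonal:
  fixes f :: "'i \<Rightarrow> 'a \<Rightarrow> real"
  assumes "finite K"
    and int: "\<And>\<alpha> \<beta>. \<alpha> \<in> K \<Longrightarrow> \<beta> \<in> K \<Longrightarrow> integrable M (\<lambda>\<omega>. f \<alpha> \<omega> * f \<beta> \<omega>)"
    and orth: "\<And>\<alpha> \<beta>. \<alpha> \<in> K \<Longrightarrow> \<beta> \<in> K \<Longrightarrow> \<alpha> \<noteq> \<beta> \<Longrightarrow> expectation (\<lambda>\<omega>. f \<alpha> \<omega> * f \<beta> \<omega>) = 0"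
  shows "integrable M (\<lambda>\<omega>. (\<Sum>\<alpha>\<in>K. f \<alpha> \<omega>)\<^sup>2)"
    and "expectation (\<lambda>\<omega>. (\<Sum>\<alpha>\<in>K. f \<alpha> \<omega>)\<^sup>2) = (\<Sum>\<alpha>\<in>K. expectation (\<lambda>\<omega>. (f \<alpha> \<omega>)\<^sup>2))"
proof -
  have sq: "(\<lambda>\<omega>. (\<Sum>\<alpha>\<in>K. f \<alpha> \<omega>)\<^sup>2) = (\<lambda>\<omega>. \<Sum>\<alpha>\<in>K. \<Sum>\<beta>\<in>K. f \<alpha> \<omega> * f \<beta> \<omega>)"
    by (simp add: power2_eq_square sum_product)
  show "integrable M (\<lambda>\<omega>. (\<Sum>\<alpha>\<in>K. f \<alpha> \<omega>)\<^sup>2)" unfolding sq using int by auto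
  have "expectation (\<lambda>\<omega>. (\<Sum>\<alpha>\<in>K. f \<alpha> \<omega>)\<^sup>2) = (\<Sum>\<alpha>\<in>K. \<Sum>\<beta>\<in>K. expectation (\<lambda>\<omega>. f \<alpha> \<omega> * f \<beta> \<omega>))"
    unfolding sq using int by (simp add: Bochner_Integration.integral_sum)
  also have "\<dots> = (\<Sum>\<alpha>\<in>K. \<Sum>\<beta>\<in>K. if \<beta> = \<alpha> then expectation (\<lambda>\<omega>. (f \<alpha> \<omega>)\<^sup>2) else 0)"
    by (intro sum.cong refl) (auto simp: orth power2_eq_square)
  also have "\<dots> = (\<Sum>\<alpha>\<in>K. expectation (\<lambda>\<omega>. (f \<alpha> \<omega>)\<^sup>2))"
    using \<open>finite K\<close> by (simp add: sum.delta)
  finally show "expectation (\<lambda>\<omega>. (\<Sum>\<alpha>\<in>K. f \<alpha> \<omega>)\<^sup>2) = (\<Sum>\<alpha>\<in>K. expectation (\<lambda>\<omega>. (f \<alpha> \<omega>)\<^sup>2))" .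
qed

end

locale gaussian_groups = prob_space M for M :: "'w measure" +
  fixes a d :: nat and n :: "nat \<Rightarrow> nat" and X :: "nat \<Rightarrow> nat \<Rightarrow> nat \<Rightarrow> 'w \<Rightarrow> real"
    and mu :: "nat \<Rightarrow> nat \<Rightarrow> real" and Sigma :: "nat \<Rightarrow> nat \<Rightarrow> nat \<Rightarrow> real"
    and TW TS :: "nat \<Rightarrow> nat \<Rightarrow> real"
  assumes a_pos: "a \<ge> 1"
    and n_ge2: "\<And>i. i < a \<Longrightarrow> n i \<ge> 2"
    and Sigma_pd: "\<And>i. i < a \<Longrightarrow> sym_posdef d (Sigma i)"
    and TW: "sym_idem a TW" and TS: "sym_idem d TS"
    and normal: "\<And>i j. i < a \<Longrightarrow> j < n i \<Longrightarrow> mvn_distributed M d (\<lambda>l. X i j l) (mu i) (Sigma i)"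
    and indep: "indep_vars (\<lambda>_. PiM {..<d} (\<lambda>_. borel))
        (\<lambda>(i, j) \<omega>. \<lambda>l\<in>{..<d}. X i j l \<omega>) {(i, j). i < a \<and> j < n i}"
begin

definition "obs_index = {(i, j). i < a \<and> j < n i}"

definition "obs \<beta> \<omega> = (\<lambda>l\<in>{..<d}. X (fst \<beta>) (snd \<beta>) l \<omega>)"

definition "centred_lin i c v = (\<Sum>l<d. c l * (v l - mu i l))"

definition "col k = (\<lambda>l. TS l k)"

definition "centred_quad i v = quad_form d TS (\<lambda>l. v l - mu i l)"

definition "centred_bil i j v w = bilinear_form d TS (\<lambda>l. v l - mu i l) (\<lambda>l. w l - mu j l)"

definition "lin_obs \<beta> c \<omega> = centred_lin (fst \<beta>) c (obs \<beta> \<omega>)"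

definition "Q \<beta> \<omega> = centred_quad (fst \<beta>) (obs \<beta> \<omega>)"

definition "B \<beta> \<gamma> \<omega> = centred_bil (fst \<beta>) (fst \<gamma>) (obs \<beta> \<omega>) (obs \<gamma> \<omega>)"

text \<open>In matrix terms \<open>W i j = tr(T_S \<Sigma>_i T_S \<Sigma>_j)\<close>, cf. \<open>trace_sym_idem_columns\<close>.\<close>

definition "W i j = (\<Sum>k<d. \<Sum>k'<d. bilinear_form d (Sigma i) (col k) (col k') * bilinear_form d (Sigma j) (col k) (col k'))"

definition "trS i = mat_tr_prod d TS (Sigma i)"

lemma obs_index_iff: "\<beta> \<in> obs_index \<longleftrightarrow> fst \<beta> < a \<and> snd \<beta> < n (fst \<beta>)"
  unfolding obs_index_def by (cases \<beta>) auto

lemma indep_obs: "indep_vars (\<lambda>_. PiM {..<d} (\<lambda>_. borel)) obs obs_index"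
proof -
  have "(\<lambda>(i, j) \<omega>. \<lambda>l\<in>{..<d}. X i j l \<omega>) = obs"
    by (auto simp: obs_def fun_eq_iff split_beta)
  then show ?thesis using indep unfolding obs_index_def by simp
qed

lemma TS_sym: "l < d \<Longrightarrow> m < d \<Longrightarrow> TS l m = TS m l"
  using TS unfolding sym_idem_def by blast

lemma Sigma_sym: "i < a \<Longrightarrow> l < d \<Longrightarrow> m < d \<Longrightarrow> Sigma i l m = Sigma i m l"
  using Sigma_pd unfolding sym_posdef_def by blast

lemma centred_lin_measurable [measurable]: "centred_lin i c \<in> borel_measurable (PiM {..<d} (\<lambda>_. borel))"
  unfolding centred_lin_def by measurable

lemma centred_quad_measurable [measurable]: "centred_quad i \<in> borel_measurable (PiM {..<d} (\<lambda>_. borel))"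
  unfolding centred_quad_def quad_form_def by measurable

lemma centred_bil_columns:
  "centred_bil i j v w = (\<Sum>k<d. centred_lin i (col k) v * centred_lin j (col k) w)"
  unfolding centred_bil_def bilinear_form_sym_idem[OF TS] centred_lin_def col_def ..

lemma centred_quad_columns: "centred_quad i v = (\<Sum>k<d. (centred_lin i (col k) v)\<^sup>2)"
  unfolding centred_quad_def quad_form_eq_bilinear_form bilinear_form_sym_idem[OF TS]
    centred_lin_def col_def power2_eq_square ..

lemma B_columns: "B \<beta> \<gamma> \<omega> = (\<Sum>k<d. lin_obs \<beta> (col k) \<omega> * lin_obs \<gamma> (col k) \<omega>)"
  unfolding B_def lin_obs_def centred_bil_columns ..

lemma B_commute: "B \<gamma> \<beta> \<omega> = B \<beta> \<gamma> \<omega>"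
  unfolding B_columns by (simp add: mult.commute)

lemma lin_obs_moments:
  assumes "\<beta> \<in> obs_index"
  shows "integrable M (\<lambda>\<omega>. lin_obs \<beta> c \<omega> ^ k)"
    and "expectation (lin_obs \<beta> c) = 0"
    and "integrable M (\<lambda>\<omega>. lin_obs \<beta> c \<omega> * lin_obs \<beta> e \<omega>)"
    and "expectation (\<lambda>\<omega>. lin_obs \<beta> c \<omega> * lin_obs \<beta> e \<omega>) = bilinear_form d (Sigma (fst \<beta>)) c e"
    and "integrable M (\<lambda>\<omega>. (lin_obs \<beta> c \<omega>)\<^sup>2 * (lin_obs \<beta> e \<omega>)\<^sup>2)"
    and "expectation (\<lambda>\<omega>. (lin_obs \<beta> c \<omega>)\<^sup>2 * (lin_obs \<beta> e \<omega>)\<^sup>2)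
           = quad_form d (Sigma (fst \<beta>)) c * quad_form d (Sigma (fst \<beta>)) e
             + 2 * (bilinear_form d (Sigma (fst \<beta>)) c e)\<^sup>2"
proof -
  have i: "fst \<beta> < a" "snd \<beta> < n (fst \<beta>)" using assms obs_index_iff by auto
  have L: "lin_obs \<beta> c = (\<lambda>\<omega>. \<Sum>l<d. c l * (X (fst \<beta>) (snd \<beta>) l \<omega> - mu (fst \<beta>) l))" for c
    unfolding lin_obs_def centred_lin_def obs_def by (auto intro!: ext sum.cong)
  note lin = mvn_linear_moments[OF normal[OF i] Sigma_pd[OF i(1)]]
    and bil = mvn_bilinear_moments[OF normal[OF i] Sigma_pd[OF i(1)]]
  show "integrable M (\<lambda>\<omega>. lin_obs \<beta> c \<omega> ^ k)" "expectation (lin_obs \<beta> c) = 0"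
    "integrable M (\<lambda>\<omega>. lin_obs \<beta> c \<omega> * lin_obs \<beta> e \<omega>)"
    "expectation (\<lambda>\<omega>. lin_obs \<beta> c \<omega> * lin_obs \<beta> e \<omega>) = bilinear_form d (Sigma (fst \<beta>)) c e"
    "integrable M (\<lambda>\<omega>. (lin_obs \<beta> c \<omega>)\<^sup>2 * (lin_obs \<beta> e \<omega>)\<^sup>2)"
    "expectation (\<lambda>\<omega>. (lin_obs \<beta> c \<omega>)\<^sup>2 * (lin_obs \<beta> e \<omega>)\<^sup>2)
       = quad_form d (Sigma (fst \<beta>)) c * quad_form d (Sigma (fst \<beta>)) e
         + 2 * (bilinear_form d (Sigma (fst \<beta>)) c e)\<^sup>2"
    unfolding L using lin(1,2) bil[where ca=c and cb=e] by auto
qed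

lemma lin_obs_measurable: "\<beta> \<in> obs_index \<Longrightarrow> lin_obs \<beta> c \<in> borel_measurable M"
  using lin_obs_moments(1)[of \<beta> c 1] by (simp add: borel_measurable_integrable)

lemma integrable_lin_obs_mult4:
  assumes "\<beta>1 \<in> obs_index" "\<beta>2 \<in> obs_index" "\<beta>3 \<in> obs_index" "\<beta>4 \<in> obs_index"
  shows "integrable M (\<lambda>\<omega>. lin_obs \<beta>1 c1 \<omega> * lin_obs \<beta>2 c2 \<omega> * lin_obs \<beta>3 c3 \<omega> * lin_obs \<beta>4 c4 \<omega>)"
  using assms by (intro integrable_mult4_of_fourth_powers lin_obs_measurable lin_obs_moments(1))

lemma integrable_lin_obs_mult3:
  assumes "\<beta>1 \<in> obs_index" "\<beta>2 \<in> obs_index" "\<beta>3 \<in> obs_index"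
  shows "integrable M (\<lambda>\<omega>. lin_obs \<beta>1 c1 \<omega> * lin_obs \<beta>2 c2 \<omega> * lin_obs \<beta>3 c3 \<omega>)"
  using integrable_mult4_of_fourth_powers[of "lin_obs \<beta>1 c1" "lin_obs \<beta>2 c2" "lin_obs \<beta>3 c3" "\<lambda>_. 1"]
    assms lin_obs_measurable lin_obs_moments(1) by simp

lemma expectation_obs_mult_pair:
  fixes f g :: "(nat \<Rightarrow> real) \<Rightarrow> real"
  assumes "\<beta> \<in> obs_index" "\<gamma> \<in> obs_index" "\<beta> \<noteq> \<gamma>"
    and [measurable]: "f \<in> borel_measurable (PiM {..<d} (\<lambda>_. borel))" "g \<in> borel_measurable (PiM {..<d} (\<lambda>_. borel))"
    and "integrable M (\<lambda>\<omega>. f (obs \<beta> \<omega>))" "integrable M (\<lambda>\<omega>. g (obs \<gamma> \<omega>))"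
  shows "expectation (\<lambda>\<omega>. f (obs \<beta> \<omega>) * g (obs \<gamma> \<omega>))
           = expectation (\<lambda>\<omega>. f (obs \<beta> \<omega>)) * expectation (\<lambda>\<omega>. g (obs \<gamma> \<omega>))"
    and "integrable M (\<lambda>\<omega>. f (obs \<beta> \<omega>) * g (obs \<gamma> \<omega>))"
  using indep_vars_expectation_mult_restrict[OF indep_obs, of \<beta> "{\<gamma>}" f "\<lambda>u. g (u \<gamma>)"] assms
  by auto

lemma trS_columns:
  assumes "i < a"
  shows "(\<Sum>k<d. bilinear_form d (Sigma i) (col k) (col k)) = trS i"
proof -
  have "(\<Sum>k<d. bilinear_form d (Sigma i) (col k) (col k))
      = (\<Sum>l<d. \<Sum>m<d. Sigma i l m * (\<Sum>k<d. TS l k * TS m k))"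
    unfolding bilinear_form_def col_def sum_distrib_left
    by (subst sum.swap, rule sum.cong[OF refl], subst sum.swap) (auto intro!: sum.cong simp: mult_ac)
  also have "\<dots> = (\<Sum>l<d. \<Sum>m<d. Sigma i l m * TS l m)"
    by (intro sum.cong refl) (simp add: sym_idem_columns_inner[OF TS])
  also have "\<dots> = trS i"
    unfolding trS_def mat_tr_prod_def using assms by (intro sum.cong refl) (simp add: Sigma_sym)
  finally show ?thesis .
qed

lemma Q_moments:
  assumes "\<beta> \<in> obs_index"
  defines "t \<equiv> trS (fst \<beta>)"
  shows "integrable M (Q \<beta>)" and "expectation (Q \<beta>) = t"
    and "integrable M (\<lambda>\<omega>. (Q \<beta> \<omega> - t)\<^sup>2)" and "expectation (\<lambda>\<omega>. (Q \<beta> \<omega> - t)\<^sup>2) = 2 * W (fst \<beta>) (fst \<beta>)"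
proof -
  let ?S = "Sigma (fst \<beta>)" and ?L = "\<lambda>k. lin_obs \<beta> (col k)"
  have Q_eq: "Q \<beta> = (\<lambda>\<omega>. \<Sum>k<d. (?L k \<omega>)\<^sup>2)"
    unfolding Q_def lin_obs_def centred_quad_columns ..
  note mom = lin_obs_moments[OF assms(1)]
  have t_eq: "t = (\<Sum>k<d. bilinear_form d ?S (col k) (col k))"
    unfolding t_def using trS_columns assms(1) obs_index_iff by simp
  show int_Q: "integrable M (Q \<beta>)" unfolding Q_eq using mom(3) by (auto simp: power2_eq_square)
  show E_Q: "expectation (Q \<beta>) = t"
    unfolding Q_eq t_eq using mom(3,4) by (simp add: Bochner_Integration.integral_sum power2_eq_square)
  have Q2_eq: "(\<lambda>\<omega>. (Q \<beta> \<omega>)\<^sup>2) = (\<lambda>\<omega>. \<Sum>k<d. \<Sum>k'<d. (?L k \<omega>)\<^sup>2 * (?L k' \<omega>)\<^sup>2)"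
    unfolding Q_eq by (simp add: power2_eq_square[of "sum _ _"] sum_product)
  have int_Q2: "integrable M (\<lambda>\<omega>. (Q \<beta> \<omega>)\<^sup>2)" unfolding Q2_eq using mom(5) by auto
  have "expectation (\<lambda>\<omega>. (Q \<beta> \<omega>)\<^sup>2) = (\<Sum>k<d. \<Sum>k'<d. bilinear_form d ?S (col k) (col k)
      * bilinear_form d ?S (col k') (col k') + 2 * (bilinear_form d ?S (col k) (col k'))\<^sup>2)"
    unfolding Q2_eq using mom(5,6) by (simp add: Bochner_Integration.integral_sum quad_form_eq_bilinear_form)
  also have "\<dots> = t\<^sup>2 + 2 * W (fst \<beta>) (fst \<beta>)"
  proof -
    have "(\<Sum>k<d. \<Sum>k'<d. bilinear_form d ?S (col k) (col k) * bilinear_form d ?S (col k') (col k')) = t\<^sup>2"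
      unfolding t_eq by (simp add: power2_eq_square sum_product)
    then show ?thesis unfolding W_def by (simp add: sum.distrib sum_distrib_left power2_eq_square)
  qed
  finally have E_Q2: "expectation (\<lambda>\<omega>. (Q \<beta> \<omega>)\<^sup>2) = t\<^sup>2 + 2 * W (fst \<beta>) (fst \<beta>)" .
  have expand: "(\<lambda>\<omega>. (Q \<beta> \<omega> - t)\<^sup>2) = (\<lambda>\<omega>. (Q \<beta> \<omega>)\<^sup>2 - 2 * t * Q \<beta> \<omega> + t\<^sup>2)"
    by (simp add: power2_diff algebra_simps)
  show "integrable M (\<lambda>\<omega>. (Q \<beta> \<omega> - t)\<^sup>2)" unfolding expand using int_Q2 int_Q by auto
  show "expectation (\<lambda>\<omega>. (Q \<beta> \<omega> - t)\<^sup>2) = 2 * W (fst \<beta>) (fst \<beta>)"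
    unfolding expand using int_Q2 int_Q E_Q2 E_Q by (simp add: power2_eq_square prob_space)
qed

lemma Q_centred_orthogonal:
  assumes "\<beta> \<in> obs_index" "\<gamma> \<in> obs_index" "\<beta> \<noteq> \<gamma>"
  shows "integrable M (\<lambda>\<omega>. (Q \<beta> \<omega> - trS (fst \<beta>)) * (Q \<gamma> \<omega> - trS (fst \<gamma>)))"
    and "expectation (\<lambda>\<omega>. (Q \<beta> \<omega> - trS (fst \<beta>)) * (Q \<gamma> \<omega> - trS (fst \<gamma>))) = 0"
proof -
  have centred: "integrable M (\<lambda>\<omega>. centred_quad (fst \<delta>) (obs \<delta> \<omega>) - trS (fst \<delta>))"
    "expectation (\<lambda>\<omega>. centred_quad (fst \<delta>) (obs \<delta> \<omega>) - trS (fst \<delta>)) = 0" if "\<delta> \<in> obs_index" for \<delta>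
    using Q_moments(1,2)[OF that] unfolding Q_def by (auto simp: prob_space)
  note pair = expectation_obs_mult_pair[OF assms, of "\<lambda>v. centred_quad (fst \<beta>) v - trS (fst \<beta>)"
      "\<lambda>v. centred_quad (fst \<gamma>) v - trS (fst \<gamma>)"]
  show "integrable M (\<lambda>\<omega>. (Q \<beta> \<omega> - trS (fst \<beta>)) * (Q \<gamma> \<omega> - trS (fst \<gamma>)))"
    and "expectation (\<lambda>\<omega>. (Q \<beta> \<omega> - trS (fst \<beta>)) * (Q \<gamma> \<omega> - trS (fst \<gamma>))) = 0"
    unfolding Q_def using pair centred assms by auto
qed

lemma integrable_B_mult_B:
  assumes "\<beta> \<in> obs_index" "\<gamma> \<in> obs_index" "\<beta>' \<in> obs_index" "\<gamma>' \<in> obs_index"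
  shows "integrable M (\<lambda>\<omega>. B \<beta> \<gamma> \<omega> * B \<beta>' \<gamma>' \<omega>)"
  unfolding B_columns sum_product using assms
  by (intro Bochner_Integration.integrable_sum) (simp add: mult.assoc[symmetric] integrable_lin_obs_mult4)

text \<open>If one observation occurs only once in \<open>B \<delta> \<gamma> * B \<beta>' \<gamma>'\<close>, its centred linear form
  factors out by independence and has mean zero.\<close>

lemma expectation_B_mult_B_isolated:
  assumes "\<delta> \<in> obs_index" "\<gamma> \<in> obs_index" "\<beta>' \<in> obs_index" "\<gamma>' \<in> obs_index"
    and "\<delta> \<notin> {\<gamma>, \<beta>', \<gamma>'}"
  shows "expectation (\<lambda>\<omega>. B \<delta> \<gamma> \<omega> * B \<beta>' \<gamma>' \<omega>) = 0"
proof -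
  let ?J = "{\<gamma>, \<beta>', \<gamma>'}"
  define g where "g k u = centred_lin (fst \<gamma>) (col k) (u \<gamma>) *
    (\<Sum>k'<d. centred_lin (fst \<beta>') (col k') (u \<beta>') * centred_lin (fst \<gamma>') (col k') (u \<gamma>'))" for k u
  have g_measurable: "g k \<in> borel_measurable (PiM ?J (\<lambda>_. PiM {..<d} (\<lambda>_. borel)))" for k
    unfolding g_def by measurable
  have g_obs: "g k (\<lambda>b\<in>?J. obs b \<omega>) = lin_obs \<gamma> (col k) \<omega> * B \<beta>' \<gamma>' \<omega>" for k \<omega>
    unfolding g_def B_columns lin_obs_def by simp
  have g_integrable: "integrable M (\<lambda>\<omega>. g k (\<lambda>b\<in>?J. obs b \<omega>))" for k
    unfolding g_obs B_columns sum_distrib_left using assms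
    by (intro Bochner_Integration.integrable_sum) (simp add: mult.assoc[symmetric] integrable_lin_obs_mult3)
  have summand: "integrable M (\<lambda>\<omega>. lin_obs \<delta> (col k) \<omega> * (lin_obs \<gamma> (col k) \<omega> * B \<beta>' \<gamma>' \<omega>))"
    "expectation (\<lambda>\<omega>. lin_obs \<delta> (col k) \<omega> * (lin_obs \<gamma> (col k) \<omega> * B \<beta>' \<gamma>' \<omega>)) = 0" for k
    using indep_vars_expectation_mult_restrict[OF indep_obs, of \<delta> ?J "centred_lin (fst \<delta>) (col k)" "g k"] assms g_measurable g_integrable lin_obs_moments(1)[of \<delta> "col k" 1] lin_obs_moments(2)[of \<delta> "col k"]
    unfolding g_obs lin_obs_def by auto
  have "B \<delta> \<gamma> \<omega> * B \<beta>' \<gamma>' \<omega> = (\<Sum>k<d. lin_obs \<delta> (col k) \<omega> * (lin_obs \<gamma> (col k) \<omega> * B \<beta>' \<gamma>' \<omega>))" for \<omega>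
    unfolding B_columns[of \<delta> \<gamma>] sum_distrib_right by (simp add: mult.assoc)
  then show ?thesis using summand by (simp add: Bochner_Integration.integral_sum)
qed

lemma expectation_B_square:
  assumes "\<beta> \<in> obs_index" "\<gamma> \<in> obs_index" "\<beta> \<noteq> \<gamma>"
  shows "expectation (\<lambda>\<omega>. B \<beta> \<gamma> \<omega> * B \<beta> \<gamma> \<omega>) = W (fst \<beta>) (fst \<gamma>)"
proof -
  let ?f = "\<lambda>i k k' v. centred_lin i (col k) v * centred_lin i (col k') v"
  have "B \<beta> \<gamma> \<omega> * B \<beta> \<gamma> \<omega> = (\<Sum>k<d. \<Sum>k'<d. ?f (fst \<beta>) k k' (obs \<beta> \<omega>) * ?f (fst \<gamma>) k k' (obs \<gamma> \<omega>))" for \<omega>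
    unfolding B_columns sum_product lin_obs_def by (simp add: mult_ac)
  moreover have "integrable M (\<lambda>\<omega>. ?f (fst \<beta>) k k' (obs \<beta> \<omega>) * ?f (fst \<gamma>) k k' (obs \<gamma> \<omega>))"
    "expectation (\<lambda>\<omega>. ?f (fst \<beta>) k k' (obs \<beta> \<omega>) * ?f (fst \<gamma>) k k' (obs \<gamma> \<omega>))
       = bilinear_form d (Sigma (fst \<beta>)) (col k) (col k') * bilinear_form d (Sigma (fst \<gamma>)) (col k) (col k')"
    for k k'
    using expectation_obs_mult_pair[OF assms, of "?f (fst \<beta>) k k'" "?f (fst \<gamma>) k k'"]
      lin_obs_moments(3,4)[OF assms(1), of "col k" "col k'"] lin_obs_moments(3,4)[OF assms(2), of "col k" "col k'"]
    unfolding lin_obs_def by auto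
  ultimately show ?thesis by (simp add: Bochner_Integration.integral_sum W_def)
qed

lemma expectation_B_mult_B:
  assumes obs: "\<beta> \<in> obs_index" "\<gamma> \<in> obs_index" "\<beta>' \<in> obs_index" "\<gamma>' \<in> obs_index"
    and "\<beta> \<noteq> \<gamma>" "\<beta>' \<noteq> \<gamma>'"
  shows "expectation (\<lambda>\<omega>. B \<beta> \<gamma> \<omega> * B \<beta>' \<gamma>' \<omega>) = (if {\<beta>, \<gamma>} = {\<beta>', \<gamma>'} then W (fst \<beta>) (fst \<gamma>) else 0)"
proof (cases "{\<beta>, \<gamma>} = {\<beta>', \<gamma>'}")
  case True
  then have "B \<beta>' \<gamma>' = B \<beta> \<gamma>"
    by (auto simp: doubleton_eq_iff intro: ext B_commute)
  then show ?thesis using True expectation_B_square[OF obs(1,2) \<open>\<beta> \<noteq> \<gamma>\<close>] by simp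
next
  case False
  have swap: "(\<lambda>\<omega>. B \<beta> \<gamma> \<omega> * B \<beta>' \<gamma>' \<omega>) = (\<lambda>\<omega>. B \<gamma> \<beta> \<omega> * B \<beta>' \<gamma>' \<omega>)"
    "(\<lambda>\<omega>. B \<beta> \<gamma> \<omega> * B \<beta>' \<gamma>' \<omega>) = (\<lambda>\<omega>. B \<beta>' \<gamma>' \<omega> * B \<beta> \<gamma> \<omega>)"
    "(\<lambda>\<omega>. B \<beta> \<gamma> \<omega> * B \<beta>' \<gamma>' \<omega>) = (\<lambda>\<omega>. B \<gamma>' \<beta>' \<omega> * B \<beta> \<gamma> \<omega>)"
    by (simp_all add: B_commute[of \<beta>] B_commute[of \<beta>'] mult.commute)
  from False consider "\<beta> \<notin> {\<beta>', \<gamma>'}" | "\<gamma> \<notin> {\<beta>', \<gamma>'}" | "\<beta>' \<notin> {\<beta>, \<gamma>}" | "\<gamma>' \<notin> {\<beta>, \<gamma>}"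
    by blast
  then have "expectation (\<lambda>\<omega>. B \<beta> \<gamma> \<omega> * B \<beta>' \<gamma>' \<omega>) = 0"
  proof cases
    case 1
    then show ?thesis using expectation_B_mult_B_isolated[OF obs(1,2,3,4)] assms by auto
  next
    case 2
    then show ?thesis unfolding swap(1) using expectation_B_mult_B_isolated[OF obs(2,1,3,4)] assms by auto
  next
    case 3
    then show ?thesis unfolding swap(2) using expectation_B_mult_B_isolated[OF obs(3,4,1,2)] assms by auto
  next
    case 4
    then show ?thesis unfolding swap(3) using expectation_B_mult_B_isolated[OF obs(4,3,1,2)] assms by auto
  qed
  then show ?thesis using False by simp
qed

definition "pair_index = Product_Type.Sigma {..<a} (\<lambda>i. Product_Type.Sigma {..<n i} (\<lambda>p. {..<p}))"

definition "B_pair = (\<lambda>(i, p, q). B (i, p) (i, q))"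

lemma obs_index_Sigma: "obs_index = Product_Type.Sigma {..<a} (\<lambda>i. {..<n i})"
  unfolding obs_index_def by auto

lemma finite_obs_index: "finite obs_index"
  unfolding obs_index_Sigma by auto

lemma expectation_square_sum_Q:
  fixes w :: "nat \<Rightarrow> real"
  shows "integrable M (\<lambda>\<omega>. (\<Sum>\<beta>\<in>obs_index. w (fst \<beta>) * (Q \<beta> \<omega> - trS (fst \<beta>)))\<^sup>2)"
    and "expectation (\<lambda>\<omega>. (\<Sum>\<beta>\<in>obs_index. w (fst \<beta>) * (Q \<beta> \<omega> - trS (fst \<beta>)))\<^sup>2)
           = (\<Sum>\<beta>\<in>obs_index. (w (fst \<beta>))\<^sup>2 * (2 * W (fst \<beta>) (fst \<beta>)))"
proof -
  let ?f = "\<lambda>\<beta> \<omega>. w (fst \<beta>) * (Q \<beta> \<omega> - trS (fst \<beta>))"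
  have prod: "?f \<alpha> \<omega> * ?f \<beta> \<omega> = w (fst \<alpha>) * w (fst \<beta>) * ((Q \<alpha> \<omega> - trS (fst \<alpha>)) * (Q \<beta> \<omega> - trS (fst \<beta>)))"
    for \<alpha> \<beta> \<omega> by (simp add: mult_ac)
  have int: "integrable M (\<lambda>\<omega>. ?f \<alpha> \<omega> * ?f \<beta> \<omega>)" if "\<alpha> \<in> obs_index" "\<beta> \<in> obs_index" for \<alpha> \<beta>
    unfolding prod using Q_moments(3)[OF that(1)] Q_centred_orthogonal(1)[OF that]
    by (cases "\<alpha> = \<beta>") (auto simp: power2_eq_square)
  have orth: "expectation (\<lambda>\<omega>. ?f \<alpha> \<omega> * ?f \<beta> \<omega>) = 0"
    if "\<alpha> \<in> obs_index" "\<beta> \<in> obs_index" "\<alpha> \<noteq> \<beta>" for \<alpha> \<beta>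
    unfolding prod using Q_centred_orthogonal(2)[OF that] by simp
  have diag: "expectation (\<lambda>\<omega>. (?f \<beta> \<omega>)\<^sup>2) = (w (fst \<beta>))\<^sup>2 * (2 * W (fst \<beta>) (fst \<beta>))"
    if "\<beta> \<in> obs_index" for \<beta>
    using Q_moments(4)[OF that] by (simp add: power_mult_distrib)
  show "integrable M (\<lambda>\<omega>. (\<Sum>\<beta>\<in>obs_index. ?f \<beta> \<omega>)\<^sup>2)"
    and "expectation (\<lambda>\<omega>. (\<Sum>\<beta>\<in>obs_index. ?f \<beta> \<omega>)\<^sup>2)
           = (\<Sum>\<beta>\<in>obs_index. (w (fst \<beta>))\<^sup>2 * (2 * W (fst \<beta>) (fst \<beta>)))"
    using expectation_square_sum_orthogonal[OF finite_obs_index int orth] diag by simp_all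
qed

lemma expectation_square_sum_B_pair:
  fixes w :: "nat \<Rightarrow> real"
  shows "integrable M (\<lambda>\<omega>. (\<Sum>\<gamma>\<in>pair_index. w (fst \<gamma>) * B_pair \<gamma> \<omega>)\<^sup>2)"
    and "expectation (\<lambda>\<omega>. (\<Sum>\<gamma>\<in>pair_index. w (fst \<gamma>) * B_pair \<gamma> \<omega>)\<^sup>2)
           = (\<Sum>\<gamma>\<in>pair_index. (w (fst \<gamma>))\<^sup>2 * W (fst \<gamma>) (fst \<gamma>))"
proof -
  let ?f = "\<lambda>\<gamma> \<omega>. w (fst \<gamma>) * B_pair \<gamma> \<omega>"
  have prod: "?f \<alpha> \<omega> * ?f \<gamma> \<omega> = w (fst \<alpha>) * w (fst \<gamma>) * (B_pair \<alpha> \<omega> * B_pair \<gamma> \<omega>)" for \<alpha> \<gamma> \<omega>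
    by (simp add: mult_ac)
  have moments: "integrable M (\<lambda>\<omega>. B_pair \<alpha> \<omega> * B_pair \<gamma> \<omega>)"
    "expectation (\<lambda>\<omega>. B_pair \<alpha> \<omega> * B_pair \<gamma> \<omega>) = (if \<alpha> = \<gamma> then W (fst \<alpha>) (fst \<alpha>) else 0)"
    if "\<alpha> \<in> pair_index" "\<gamma> \<in> pair_index" for \<alpha> \<gamma>
  proof -
    obtain i p q i' p' q' where \<alpha>: "\<alpha> = (i, p, q)" and \<gamma>: "\<gamma> = (i', p', q')" by (cases \<alpha>, cases \<gamma>) auto
    have obs: "(i, p) \<in> obs_index" "(i, q) \<in> obs_index" "(i', p') \<in> obs_index" "(i', q') \<in> obs_index"
      and "q < p" "q' < p'"
      using that unfolding \<alpha> \<gamma> pair_index_def obs_index_def by auto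
    then have "{(i, p), (i, q)} = {(i', p'), (i', q')} \<longleftrightarrow> \<alpha> = \<gamma>"
      unfolding \<alpha> \<gamma> by (auto simp: doubleton_eq_iff)
    then show "integrable M (\<lambda>\<omega>. B_pair \<alpha> \<omega> * B_pair \<gamma> \<omega>)"
      "expectation (\<lambda>\<omega>. B_pair \<alpha> \<omega> * B_pair \<gamma> \<omega>) = (if \<alpha> = \<gamma> then W (fst \<alpha>) (fst \<alpha>) else 0)"
      using integrable_B_mult_B[OF obs(1-4)] expectation_B_mult_B[OF obs(1-4)] \<open>q < p\<close> \<open>q' < p'\<close>
      unfolding B_pair_def \<alpha> \<gamma> by auto
  qed
  have int: "integrable M (\<lambda>\<omega>. ?f \<alpha> \<omega> * ?f \<gamma> \<omega>)" if "\<alpha> \<in> pair_index" "\<gamma> \<in> pair_index" for \<alpha> \<gamma>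
    unfolding prod using moments(1)[OF that] by simp
  have orth: "expectation (\<lambda>\<omega>. ?f \<alpha> \<omega> * ?f \<gamma> \<omega>) = 0"
    if "\<alpha> \<in> pair_index" "\<gamma> \<in> pair_index" "\<alpha> \<noteq> \<gamma>" for \<alpha> \<gamma>
    unfolding prod using moments(2)[OF that(1,2)] that(3) by simp
  have diag: "expectation (\<lambda>\<omega>. (?f \<gamma> \<omega>)\<^sup>2) = (w (fst \<gamma>))\<^sup>2 * W (fst \<gamma>) (fst \<gamma>)"
    if "\<gamma> \<in> pair_index" for \<gamma>
    using moments(2)[OF that that] by (simp add: power2_eq_square mult_ac)
  have fin: "finite pair_index" unfolding pair_index_def by auto
  show "integrable M (\<lambda>\<omega>. (\<Sum>\<gamma>\<in>pair_index. ?f \<gamma> \<omega>)\<^sup>2)"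
    and "expectation (\<lambda>\<omega>. (\<Sum>\<gamma>\<in>pair_index. ?f \<gamma> \<omega>)\<^sup>2)
           = (\<Sum>\<gamma>\<in>pair_index. (w (fst \<gamma>))\<^sup>2 * W (fst \<gamma>) (fst \<gamma>))"
    using expectation_square_sum_orthogonal[OF fin int orth] diag by simp_all
qed

definition "size_ratio i = real (\<Sum>i'<a. n i') / real (n i)"

definition "group_weight i = size_ratio i * TW i i"

definition "cross_weight i = 2 * group_weight i / (real (n i) * (real (n i) - 1))"

definition "quad_part \<omega> = (\<Sum>\<beta>\<in>obs_index. group_weight (fst \<beta>) / real (n (fst \<beta>)) * (Q \<beta> \<omega> - trS (fst \<beta>)))"

definition "cross_part \<omega> = (\<Sum>\<gamma>\<in>pair_index. cross_weight (fst \<gamma>) * B_pair \<gamma> \<omega>)"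

lemma quad_form_obs_diff:
  "quad_form d TS (\<lambda>l. X i p l \<omega> - X i q l \<omega>) = Q (i, p) \<omega> + Q (i, q) \<omega> - 2 * B (i, p) (i, q) \<omega>"
proof -
  have "quad_form d TS (\<lambda>l. X i p l \<omega> - X i q l \<omega>)
      = quad_form d TS (\<lambda>l. (obs (i, p) \<omega> l - mu i l) - (obs (i, q) \<omega> l - mu i l))"
    unfolding obs_def by (rule quad_form_cong) simp
  moreover have "quad_form d TS (\<lambda>l. x l - y l) = quad_form d TS x + quad_form d TS y - 2 * bilinear_form d TS x y"
    for x y by (rule quad_form_diff) (rule TS_sym)
  ultimately show ?thesis
    unfolding Q_def B_def centred_quad_def centred_bil_def
    by (simp only: fst_conv)
qed

lemma A1_minus_trS:
  assumes "i < a"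
  shows "A1 d (n i) TS (\<lambda>j l. X i j l \<omega>) - trS i
    = 1 / real (n i) * (\<Sum>j<n i. Q (i, j) \<omega> - trS i)
      - 2 / (real (n i) * (real (n i) - 1)) * (\<Sum>p<n i. \<Sum>q<p. B (i, p) (i, q) \<omega>)"
proof -
  let ?N = "real (n i)"
  have N: "?N \<ge> 2" using n_ge2[OF assms] by simp
  have "(\<Sum>p<n i. \<Sum>q<p. quad_form d TS (\<lambda>l. X i p l \<omega> - X i q l \<omega>))
      = (\<Sum>p<n i. \<Sum>q<p. Q (i, p) \<omega> + Q (i, q) \<omega>) - 2 * (\<Sum>p<n i. \<Sum>q<p. B (i, p) (i, q) \<omega>)"
    by (simp add: quad_form_obs_diff sum_subtractf sum_distrib_left)
  also have "\<dots> = (?N - 1) * (\<Sum>j<n i. Q (i, j) \<omega>) - 2 * (\<Sum>p<n i. \<Sum>q<p. B (i, p) (i, q) \<omega>)"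
    by (simp only: sum_pairs_add)
  finally have "A1 d (n i) TS (\<lambda>j l. X i j l \<omega>)
      = ((?N - 1) * (\<Sum>j<n i. Q (i, j) \<omega>) - 2 * (\<Sum>p<n i. \<Sum>q<p. B (i, p) (i, q) \<omega>)) / (?N * (?N - 1))"
    unfolding A1_def real_choose_two by simp
  also have "\<dots> = (\<Sum>j<n i. Q (i, j) \<omega>) / ?N - 2 / (?N * (?N - 1)) * (\<Sum>p<n i. \<Sum>q<p. B (i, p) (i, q) \<omega>)"
    using N by (simp add: diff_divide_distrib)
  finally show ?thesis using N by (simp add: sum_subtractf right_diff_distrib)
qed

lemma numerator_eq:
  "(\<Sum>i<a. group_weight i * A1 d (n i) TS (\<lambda>j l. X i j l \<omega>)) - (\<Sum>i<a. group_weight i * trS i)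
    = quad_part \<omega> - cross_part \<omega>"
proof -
  have group: "group_weight i * (A1 d (n i) TS (\<lambda>j l. X i j l \<omega>) - trS i)
      = (\<Sum>j<n i. group_weight i / real (n i) * (Q (i, j) \<omega> - trS i))
        - (\<Sum>p<n i. \<Sum>q<p. cross_weight i * B (i, p) (i, q) \<omega>)" if "i < a" for i
  proof -
    have "group_weight i * (A1 d (n i) TS (\<lambda>j l. X i j l \<omega>) - trS i)
        = group_weight i * (1 / real (n i) * (\<Sum>j<n i. Q (i, j) \<omega> - trS i)
          - 2 / (real (n i) * (real (n i) - 1)) * (\<Sum>p<n i. \<Sum>q<p. B (i, p) (i, q) \<omega>))"
      using A1_minus_trS[OF that] by simp
    also have "\<dots> = group_weight i / real (n i) * (\<Sum>j<n i. Q (i, j) \<omega> - trS i)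
          - cross_weight i * (\<Sum>p<n i. \<Sum>q<p. B (i, p) (i, q) \<omega>)"
      unfolding cross_weight_def by (simp add: right_diff_distrib)
    finally show ?thesis by (simp add: sum_distrib_left)
  qed
  have "(\<Sum>i<a. group_weight i * A1 d (n i) TS (\<lambda>j l. X i j l \<omega>)) - (\<Sum>i<a. group_weight i * trS i)
      = (\<Sum>i<a. group_weight i * (A1 d (n i) TS (\<lambda>j l. X i j l \<omega>) - trS i))"
    by (simp add: sum_subtractf right_diff_distrib)
  also have "\<dots> = (\<Sum>i<a. (\<Sum>j<n i. group_weight i / real (n i) * (Q (i, j) \<omega> - trS i))
        - (\<Sum>p<n i. \<Sum>q<p. cross_weight i * B (i, p) (i, q) \<omega>))"
    using group by (intro sum.cong refl) simp
  also have "\<dots> = quad_part \<omega> - cross_part \<omega>"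
    unfolding quad_part_def cross_part_def obs_index_Sigma pair_index_def B_pair_def
    by (simp add: sum_subtractf sum.Sigma split_beta)
  finally show ?thesis .
qed

lemma sum_obs_index_group: "(\<Sum>\<beta>\<in>obs_index. f (fst \<beta>)) = (\<Sum>i<a. real (n i) * f i)"
proof -
  have "(\<Sum>\<beta>\<in>obs_index. f (fst \<beta>)) = (\<Sum>i<a. \<Sum>j<n i. f i)"
    unfolding obs_index_Sigma by (subst sum.Sigma) (auto simp: split_beta)
  then show ?thesis by simp
qed

lemma sum_pair_index_group: "(\<Sum>\<gamma>\<in>pair_index. f (fst \<gamma>)) = (\<Sum>i<a. (\<Sum>p<n i. real p) * f i)"
proof -
  have "(\<Sum>\<gamma>\<in>pair_index. f (fst \<gamma>)) = (\<Sum>i<a. \<Sum>pq\<in>Product_Type.Sigma {..<n i} (\<lambda>p. {..<p}). f i)"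
    unfolding pair_index_def by (subst sum.Sigma) (auto simp: split_beta)
  also have "\<dots> = (\<Sum>i<a. (\<Sum>p<n i. real p) * f i)"
    by (simp add: card_SigmaI flip: of_nat_sum)
  finally show ?thesis .
qed

lemma W_diag_nonneg: "W i i \<ge> 0"
  unfolding W_def by (intro sum_nonneg) auto

lemma Min_group_size:
  assumes "i < a"
  shows "Min (n ` {..<a}) \<le> n i" and "Min (n ` {..<a}) \<ge> 2"
proof -
  have "Min (n ` {..<a}) \<in> n ` {..<a}" using a_pos by (intro Min_in) (auto simp: lessThan_empty_iff)
  then show "Min (n ` {..<a}) \<ge> 2" using n_ge2 by auto
  show "Min (n ` {..<a}) \<le> n i" using assms by simp
qed

lemma second_moments_bound:
  defines "m \<equiv> real (Min (n ` {..<a}))"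
  shows "integrable M (\<lambda>\<omega>. (quad_part \<omega>)\<^sup>2)" and "integrable M (\<lambda>\<omega>. (cross_part \<omega>)\<^sup>2)"
    and "expectation (\<lambda>\<omega>. (quad_part \<omega>)\<^sup>2) + expectation (\<lambda>\<omega>. (cross_part \<omega>)\<^sup>2)
           \<le> 2 / (m - 1) * (\<Sum>i<a. (group_weight i)\<^sup>2 * W i i)"
proof -
  note quad = expectation_square_sum_Q[of "\<lambda>i. group_weight i / real (n i)", folded quad_part_def]
  note cross = expectation_square_sum_B_pair[of cross_weight, folded cross_part_def]
  show "integrable M (\<lambda>\<omega>. (quad_part \<omega>)\<^sup>2)" "integrable M (\<lambda>\<omega>. (cross_part \<omega>)\<^sup>2)"
    using quad(1) cross(1) by (simp_all add: quad_part_def cross_part_def)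
  have group: "real (n i) * (group_weight i / real (n i))\<^sup>2 * (2 * W i i) + (\<Sum>p<n i. real p) * (cross_weight i)\<^sup>2 * W i i
      \<le> 2 / (m - 1) * ((group_weight i)\<^sup>2 * W i i)" if "i < a" for i
  proof -
    let ?N = "real (n i)"
    have N: "?N \<ge> 2" "m \<le> ?N" "m \<ge> 2" using n_ge2[OF that] Min_group_size[OF that] unfolding m_def by auto
    have "?N * (group_weight i / ?N)\<^sup>2 * (2 * W i i) + (\<Sum>p<n i. real p) * (cross_weight i)\<^sup>2 * W i i
        = 2 / (?N - 1) * ((group_weight i)\<^sup>2 * W i i)"
      unfolding cross_weight_def by (rule weighted_variance_identity[OF N(1) sum_lessThan_real])
    also have "\<dots> \<le> 2 / (m - 1) * ((group_weight i)\<^sup>2 * W i i)"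
      using N W_diag_nonneg[of i] by (intro mult_right_mono divide_left_mono) auto
    finally show ?thesis .
  qed
  have "expectation (\<lambda>\<omega>. (quad_part \<omega>)\<^sup>2) + expectation (\<lambda>\<omega>. (cross_part \<omega>)\<^sup>2)
      = (\<Sum>i<a. real (n i) * (group_weight i / real (n i))\<^sup>2 * (2 * W i i)
                 + (\<Sum>p<n i. real p) * (cross_weight i)\<^sup>2 * W i i)"
    using quad(2) cross(2)
      sum_obs_index_group[of "\<lambda>i. (group_weight i / real (n i))\<^sup>2 * (2 * W i i)"]
      sum_pair_index_group[of "\<lambda>i. (cross_weight i)\<^sup>2 * W i i"]
    unfolding quad_part_def cross_part_def by (simp add: sum.distrib mult.assoc)
  also have "\<dots> \<le> (\<Sum>i<a. 2 / (m - 1) * ((group_weight i)\<^sup>2 * W i i))"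
    using group by (intro sum_mono) auto
  finally show "expectation (\<lambda>\<omega>. (quad_part \<omega>)\<^sup>2) + expectation (\<lambda>\<omega>. (cross_part \<omega>)\<^sup>2)
      \<le> 2 / (m - 1) * (\<Sum>i<a. (group_weight i)\<^sup>2 * W i i)"
    by (simp add: sum_distrib_left)
qed

definition "TS_Sigma j l m = (\<Sum>r<d. TS l r * Sigma j r m)"

definition "TV_mat = mat_mult (block_index a d) (kron TW TS) (blockdiag (\<lambda>i l m. size_ratio i * Sigma i l m))"

lemma TV_mat_entry:
  assumes "q \<in> block_index a d"
  shows "TV_mat p q = TW (fst p) (fst q) * size_ratio (fst q) * TS_Sigma (fst q) (snd p) (snd q)"
proof -
  have "TV_mat p q = (\<Sum>x<a. \<Sum>y<d. kron TW TS p (x, y) * blockdiag (\<lambda>i l m. size_ratio i * Sigma i l m) (x, y) q)"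
    unfolding TV_mat_def mat_mult_def block_index_def sum.cartesian_product' ..
  also have "\<dots> = (\<Sum>x<a. if x = fst q then TW (fst p) (fst q) * size_ratio (fst q) * TS_Sigma (fst q) (snd p) (snd q) else 0)"
    unfolding kron_def blockdiag_def TS_Sigma_def by (intro sum.cong refl) (simp add: sum_distrib_left mult_ac)
  also have "\<dots> = TW (fst p) (fst q) * size_ratio (fst q) * TS_Sigma (fst q) (snd p) (snd q)"
    using assms by (simp add: block_index_def mem_Times_iff)
  finally show ?thesis .
qed

lemma trace_TV_mat_square:
  "mat_trace (block_index a d) (mat_mult (block_index a d) TV_mat TV_mat)
    = (\<Sum>i<a. \<Sum>j<a. (TW i j)\<^sup>2 * size_ratio i * size_ratio j * W i j)"
proof -
  have TW_sym: "TW i j = TW j i" if "i < a" "j < a" for i j using TW that unfolding sym_idem_def by blast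
  have "mat_trace (block_index a d) (mat_mult (block_index a d) TV_mat TV_mat)
      = (\<Sum>i<a. \<Sum>l<d. \<Sum>j<a. \<Sum>m<d. TV_mat (i, l) (j, m) * TV_mat (j, m) (i, l))"
    unfolding mat_trace_def mat_mult_def block_index_def sum.cartesian_product' ..
  also have "\<dots> = (\<Sum>i<a. \<Sum>j<a. \<Sum>l<d. \<Sum>m<d. TV_mat (i, l) (j, m) * TV_mat (j, m) (i, l))"
    by (intro sum.cong refl sum.swap)
  also have "\<dots> = (\<Sum>i<a. \<Sum>j<a. (TW i j)\<^sup>2 * size_ratio i * size_ratio j
      * (\<Sum>l<d. \<Sum>m<d. TS_Sigma j l m * TS_Sigma i m l))"
    by (intro sum.cong refl)
      (simp add: TV_mat_entry block_index_def TW_sym[of _ i for i] sum_distrib_left power2_eq_square mult_ac)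
  also have "\<dots> = (\<Sum>i<a. \<Sum>j<a. (TW i j)\<^sup>2 * size_ratio i * size_ratio j * W i j)"
  proof (intro sum.cong refl)
    fix i j assume "i \<in> {..<a}" "j \<in> {..<a}"
    then show "(TW i j)\<^sup>2 * size_ratio i * size_ratio j * (\<Sum>l<d. \<Sum>m<d. TS_Sigma j l m * TS_Sigma i m l)
        = (TW i j)\<^sup>2 * size_ratio i * size_ratio j * W i j"
      unfolding TS_Sigma_def W_def col_def by (simp add: trace_sym_idem_columns[OF TS Sigma_sym])
  qed
  finally show ?thesis .
qed

text \<open>\<open>W i j\<close> is the second moment of \<open>B \<beta> \<gamma>\<close> for observations from the groups \<open>i\<close> and \<open>j\<close>,
  which is how its nonnegativity is seen most easily.\<close>

lemma W_nonneg:
  assumes "i < a" "j < a"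
  shows "W i j \<ge> 0"
proof (cases "i = j")
  case True
  then show ?thesis using W_diag_nonneg by simp
next
  case False
  have obs: "(i, 0) \<in> obs_index" "(j, 0) \<in> obs_index"
    using assms n_ge2 unfolding obs_index_def by fastforce+
  have "W i j = expectation (\<lambda>\<omega>. B (i, 0) (j, 0) \<omega> * B (i, 0) (j, 0) \<omega>)"
    using expectation_B_square[OF obs] False by simp
  also have "\<dots> \<ge> 0" by (intro integral_nonneg_AE) auto
  finally show ?thesis .
qed

lemma size_ratio_nonneg: "size_ratio i \<ge> 0"
  unfolding size_ratio_def by (simp add: sum_nonneg)

lemma trace_TV_mat_square_ge:
  "(\<Sum>i<a. (group_weight i)\<^sup>2 * W i i) \<le> mat_trace (block_index a d) (mat_mult (block_index a d) TV_mat TV_mat)"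
proof -
  have nonneg: "0 \<le> (TW i j)\<^sup>2 * size_ratio i * size_ratio j * W i j" if "i < a" "j < a" for i j
    using W_nonneg[OF that] size_ratio_nonneg[of i] size_ratio_nonneg[of j] by simp
  have "(\<Sum>i<a. (group_weight i)\<^sup>2 * W i i) = (\<Sum>i<a. (TW i i)\<^sup>2 * size_ratio i * size_ratio i * W i i)"
    unfolding group_weight_def by (simp add: power2_eq_square mult_ac)
  also have "\<dots> \<le> (\<Sum>i<a. \<Sum>j<a. (TW i j)\<^sup>2 * size_ratio i * size_ratio j * W i j)"
    using nonneg by (intro sum_mono member_le_sum) auto
  finally show ?thesis unfolding trace_TV_mat_square .
qed

lemma quad_part_measurable: "quad_part \<in> borel_measurable M"
proof -
  have "integrable M quad_part"
    unfolding quad_part_def[abs_def] using Q_moments(1) by auto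
  then show ?thesis by (rule borel_measurable_integrable)
qed

lemma cross_part_measurable: "cross_part \<in> borel_measurable M"
proof -
  have "B \<beta> \<gamma> \<in> borel_measurable M" if "\<beta> \<in> obs_index" "\<gamma> \<in> obs_index" for \<beta> \<gamma>
  proof -
    have "B \<beta> \<gamma> = (\<lambda>\<omega>. \<Sum>k<d. lin_obs \<beta> (col k) \<omega> * lin_obs \<gamma> (col k) \<omega>)"
      by (rule ext) (rule B_columns)
    then show ?thesis using lin_obs_measurable that by simp
  qed
  then have "B_pair \<gamma> \<in> borel_measurable M" if "\<gamma> \<in> pair_index" for \<gamma>
    using that unfolding pair_index_def obs_index_def B_pair_def by auto
  then show ?thesis
    unfolding cross_part_def[abs_def] by (intro borel_measurable_sum borel_measurable_times borel_measurable_const)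
qed

lemma numerator_second_moment:
  shows "(\<lambda>\<omega>. quad_part \<omega> - cross_part \<omega>) \<in> borel_measurable M"
    and "integrable M (\<lambda>\<omega>. (quad_part \<omega> - cross_part \<omega>)\<^sup>2)"
    and "expectation (\<lambda>\<omega>. (quad_part \<omega> - cross_part \<omega>)\<^sup>2)
           \<le> 4 / (real (Min (n ` {..<a})) - 1) * (\<Sum>i<a. (group_weight i)\<^sup>2 * W i i)"
proof -
  note moments = second_moments_bound
  show "(\<lambda>\<omega>. quad_part \<omega> - cross_part \<omega>) \<in> borel_measurable M"
    using quad_part_measurable cross_part_measurable by simp
  have bound: "(quad_part \<omega> - cross_part \<omega>)\<^sup>2 \<le> 2 * (quad_part \<omega>)\<^sup>2 + 2 * (cross_part \<omega>)\<^sup>2" for \<omega>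
    using zero_le_power2[of "quad_part \<omega> + cross_part \<omega>"] by (simp add: power2_eq_square algebra_simps)
  show int: "integrable M (\<lambda>\<omega>. (quad_part \<omega> - cross_part \<omega>)\<^sup>2)"
    by (rule Bochner_Integration.integrable_bound[where f="\<lambda>\<omega>. 2 * (quad_part \<omega>)\<^sup>2 + 2 * (cross_part \<omega>)\<^sup>2"])
      (use moments(1,2) bound quad_part_measurable cross_part_measurable in auto)
  have "expectation (\<lambda>\<omega>. (quad_part \<omega> - cross_part \<omega>)\<^sup>2)
      \<le> expectation (\<lambda>\<omega>. 2 * (quad_part \<omega>)\<^sup>2 + 2 * (cross_part \<omega>)\<^sup>2)"
    using int moments(1,2) bound by (intro integral_mono) auto
  also have "\<dots> = 2 * (expectation (\<lambda>\<omega>. (quad_part \<omega>)\<^sup>2) + expectation (\<lambda>\<omega>. (cross_part \<omega>)\<^sup>2))"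
    using moments(1,2) by simp
  also have "\<dots> \<le> 4 / (real (Min (n ` {..<a})) - 1) * (\<Sum>i<a. (group_weight i)\<^sup>2 * W i i)"
    using moments(3) by simp
  finally show "expectation (\<lambda>\<omega>. (quad_part \<omega> - cross_part \<omega>)\<^sup>2)
      \<le> 4 / (real (Min (n ` {..<a})) - 1) * (\<Sum>i<a. (group_weight i)\<^sup>2 * W i i)" .
qed

lemma numerator_tail_bound:
  assumes \<epsilon>: "\<epsilon> > 0"
  shows "measure M {\<omega> \<in> space M.
      \<bar>((\<Sum>i<a. real (\<Sum>i'<a. n i') / real (n i) * TW i i * A1 d (n i) TS (\<lambda>j l. X i j l \<omega>))
        - (\<Sum>i<a. real (\<Sum>i'<a. n i') / real (n i) * TW i i * mat_tr_prod d TS (Sigma i)))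
       / sqrt (2 * mat_trace (block_index a d)
            (let TV = mat_mult (block_index a d) (kron TW TS)
                        (blockdiag (\<lambda>i l m. real (\<Sum>i'<a. n i') / real (n i) * Sigma i l m))
             in mat_mult (block_index a d) TV TV))\<bar> > \<epsilon>}
    \<le> 2 / (\<epsilon>\<^sup>2 * (real (Min (n ` {..<a})) - 1))"
proof -
  define Tr where "Tr = mat_trace (block_index a d) (mat_mult (block_index a d) TV_mat TV_mat)"
  define m where "m = real (Min (n ` {..<a}))"
  define Z where "Z = (\<lambda>\<omega>. quad_part \<omega> - cross_part \<omega>)"
  have Z_measurable [measurable]: "Z \<in> borel_measurable M" and Z_integrable: "integrable M (\<lambda>\<omega>. (Z \<omega>)\<^sup>2)"
    unfolding Z_def using numerator_second_moment(1,2) by simp_all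
  have numerator: "(\<Sum>i<a. real (\<Sum>i'<a. n i') / real (n i) * TW i i * A1 d (n i) TS (\<lambda>j l. X i j l \<omega>))
      - (\<Sum>i<a. real (\<Sum>i'<a. n i') / real (n i) * TW i i * mat_tr_prod d TS (Sigma i)) = Z \<omega>" for \<omega>
    using numerator_eq unfolding Z_def group_weight_def size_ratio_def trS_def by simp
  have denominator: "mat_trace (block_index a d)
            (let TV = mat_mult (block_index a d) (kron TW TS)
                        (blockdiag (\<lambda>i l m. real (\<Sum>i'<a. n i') / real (n i) * Sigma i l m))
             in mat_mult (block_index a d) TV TV) = Tr"
    unfolding Tr_def TV_mat_def size_ratio_def Let_def ..
  have m: "m \<ge> 2" unfolding m_def using Min_group_size(2)[of 0] a_pos by simp
  have Tr: "(\<Sum>i<a. (group_weight i)\<^sup>2 * W i i) \<le> Tr" "0 \<le> (\<Sum>i<a. (group_weight i)\<^sup>2 * W i i)"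
    unfolding Tr_def using trace_TV_mat_square_ge W_diag_nonneg by (auto intro: sum_nonneg)
  have "measure M {\<omega> \<in> space M. \<bar>Z \<omega> / sqrt (2 * Tr)\<bar> > \<epsilon>} \<le> 2 / (\<epsilon>\<^sup>2 * (m - 1))"
  proof (cases "Tr = 0")
    case True
    then show ?thesis using \<epsilon> m by simp
  next
    case False
    then have Tr_pos: "Tr > 0" using Tr by simp
    define s where "s = sqrt (2 * Tr)"
    have s: "s > 0" "s\<^sup>2 = 2 * Tr" unfolding s_def using Tr_pos by simp_all
    have "4 / (m - 1) * (\<Sum>i<a. (group_weight i)\<^sup>2 * W i i) \<le> 4 / (m - 1) * Tr"
      using Tr(1) m by (intro mult_left_mono) auto
    then have EZ: "expectation (\<lambda>\<omega>. (Z \<omega>)\<^sup>2) \<le> 4 / (m - 1) * Tr"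
      using numerator_second_moment(3) unfolding Z_def m_def by linarith
    have "measure M {\<omega> \<in> space M. \<bar>Z \<omega> / sqrt (2 * Tr)\<bar> > \<epsilon>} \<le> measure M {\<omega> \<in> space M. \<bar>Z \<omega>\<bar> \<ge> \<epsilon> * s}"
    proof (rule finite_measure_mono)
      show "{\<omega> \<in> space M. \<bar>Z \<omega> / sqrt (2 * Tr)\<bar> > \<epsilon>} \<subseteq> {\<omega> \<in> space M. \<bar>Z \<omega>\<bar> \<ge> \<epsilon> * s}"
        using s(1) by (auto simp: s_def[symmetric] abs_divide pos_less_divide_eq)
    qed measurable
    also have "\<dots> \<le> expectation (\<lambda>\<omega>. (Z \<omega>)\<^sup>2) / (\<epsilon> * s)\<^sup>2"
      using second_moment_method[OF Z_measurable Z_integrable] \<epsilon> s by simp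
    also have "\<dots> \<le> 4 / (m - 1) * Tr / (\<epsilon>\<^sup>2 * (2 * Tr))"
      unfolding power_mult_distrib s(2) using \<epsilon> Tr_pos by (intro divide_right_mono[OF EZ]) simp
    also have "\<dots> = 2 / (\<epsilon>\<^sup>2 * (m - 1))"
      using Tr_pos m \<epsilon> by (simp add: field_simps)
    finally show ?thesis .
  qed
  then show ?thesis unfolding numerator denominator m_def .
qed

end

theorem lemmaA11:
  fixes M :: "nat \<Rightarrow> 'w measure"
    and a d :: "nat \<Rightarrow> nat"
    and n :: "nat \<Rightarrow> nat \<Rightarrow> nat"
    and X :: "nat \<Rightarrow> nat \<Rightarrow> nat \<Rightarrow> nat \<Rightarrow> 'w \<Rightarrow> real"
    and mu :: "nat \<Rightarrow> nat \<Rightarrow> nat \<Rightarrow> real"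
    and Sigma :: "nat \<Rightarrow> nat \<Rightarrow> nat \<Rightarrow> nat \<Rightarrow> real"
    and TW TS :: "nat \<Rightarrow> nat \<Rightarrow> nat \<Rightarrow> real"
  assumes prob: "\<And>k. prob_space (M k)"
    and a_pos: "\<And>k. a k \<ge> 1"
    and d_pos: "\<And>k. d k \<ge> 1"
    and n_ge2: "\<And>k i. i < a k \<Longrightarrow> n k i \<ge> 2"
    and Sigma_pd: "\<And>k i. i < a k \<Longrightarrow> sym_posdef (d k) (Sigma k i)"
    and TW: "\<And>k. sym_idem (a k) (TW k)"
    and TS: "\<And>k. sym_idem (d k) (TS k)"
    and normal: "\<And>k i j. i < a k \<Longrightarrow> j < n k i \<Longrightarrow>
        mvn_distributed (M k) (d k) (\<lambda>l. X k i j l) (mu k i) (Sigma k i)"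
    and indep: "\<And>k. prob_space.indep_vars (M k) (\<lambda>_. PiM {..<d k} (\<lambda>_. borel))
        (\<lambda>(i, j) \<omega>. \<lambda>l\<in>{..<d k}. X k i j l \<omega>) {(i, j). i < a k \<and> j < n k i}"
    and min_n: "filterlim (\<lambda>k. Min (n k ` {..<a k})) at_top sequentially"
  shows "\<forall>\<epsilon>>0. (\<lambda>k. measure (M k) {\<omega> \<in> space (M k).
      \<bar>((\<Sum>i<a k. real (\<Sum>i'<a k. n k i') / real (n k i) * TW k i i *
             A1 (d k) (n k i) (TS k) (\<lambda>j l. X k i j l \<omega>))
        - (\<Sum>i<a k. real (\<Sum>i'<a k. n k i') / real (n k i) * TW k i i *
             mat_tr_prod (d k) (TS k) (Sigma k i)))
       / sqrt (2 * mat_trace (block_index (a k) (d k))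
            (let TV = mat_mult (block_index (a k) (d k)) (kron (TW k) (TS k))
                        (blockdiag (\<lambda>i l m. real (\<Sum>i'<a k. n k i') / real (n k i) * Sigma k i l m))
             in mat_mult (block_index (a k) (d k)) TV TV))\<bar> > \<epsilon>})
    \<longlonglongrightarrow> 0"
proof -
  have model: "gaussian_groups (M k) (a k) (d k) (n k) (X k) (mu k) (Sigma k) (TW k) (TS k)" for k
    unfolding gaussian_groups_def gaussian_groups_axioms_def
    using prob a_pos n_ge2 Sigma_pd TW TS normal indep by auto
  define m where "m k = real (Min (n k ` {..<a k}))" for k
  have "filterlim m at_top sequentially"
    unfolding m_def by (rule filterlim_compose[OF filterlim_real_sequentially min_n])
  then have "filterlim (\<lambda>k. -1 + m k) at_top sequentially"
    by (rule filterlim_tendsto_add_at_top[OF tendsto_const])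
  then have "filterlim (\<lambda>k. \<epsilon>\<^sup>2 * (-1 + m k)) at_top sequentially" if "\<epsilon> > 0" for \<epsilon> :: real
    using that by (intro filterlim_tendsto_pos_mult_at_top[OF tendsto_const]) auto
  then have bound_lim: "(\<lambda>k. 2 / (\<epsilon>\<^sup>2 * (m k - 1))) \<longlonglongrightarrow> 0" if "\<epsilon> > 0" for \<epsilon> :: real
    using that by (intro tendsto_divide_0[OF tendsto_const] filterlim_at_top_imp_at_infinity) auto
  show ?thesis
    by (intro allI impI tendsto_sandwich[OF always_eventually always_eventually tendsto_const bound_lim])
      (use gaussian_groups.numerator_tail_bound[OF model] in \<open>simp_all add: m_def\<close>)
qed

end
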